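(* Let $M>0$, $\mu>0$, $n\in\{0,1,2,\dots\}$, and let $m,k\in\{0,1,2,\dots\}$ with $$m\geq 2k+1+\sqrt{6k^2+6k+1},$$ and put $l=m+k$. Let $a\in[0,M)$ satisfy $$1>\frac{a}{M}>\frac{2\sqrt6}{5}\,\frac{\sqrt{1+\frac{1}{m}\left[2k+1+\frac{k(k+1)}{m}\right]}}{1+\frac{2/5}{m}\left[2k+1+\frac{k(k+1)}{m}\right]}.$$ Define $\alpha_1=\frac{ma}{\mu M^2}$, $\alpha_2=\frac{2n+1}{\mu M}\sqrt{1-\frac{a^2}{M^2}}$, $\alpha=\alpha_1-i\alpha_2$, $\epsilon=2\sqrt{1-\frac{a^2}{M^2}}$, $\beta=6-\frac{l(l+1)}{\mu^2M^2}$, and, when $\beta\geq0$, $$q(z)=z^4+\frac{4z}{\beta+\epsilon}\left[(2+\epsilon)(z^2+1)+\alpha(z^2-1)\right]+2\,\frac{16-\beta+3\epsilon}{\beta+\epsilon}\,z^2+1,\quad z\in\mathbb{C}.$$ Then the open interval $$I=\left(\sqrt{\tfrac16\,l(l+1)}\,,\ \frac{\frac{ma}{M}}{2\left(1+\sqrt{1-\frac{a^2}{M^2}}\right)}\right)$$ is non-empty, and for every $\mu$ with $\mu M\in I$, the open first quadrant $\{z\in\mathbb{C}:\mathrm{Re}(z)>0,\ \mathrm{Im}(z)>0\}$ contains precisely $1$ root of $q$. (Note $\frac{2\sqrt6}{5}\approx0.979796$.) *)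

theory Defs
  imports "HOL-Analysis.Analysis" "HOL-Computational_Algebra.Polynomial"
begin

definition alpha1 :: "real \<Rightarrow> real \<Rightarrow> real \<Rightarrow> nat \<Rightarrow> real" where
  "alpha1 M mu a m = real m * a / (mu * M\<^sup>2)"

definition alpha2 :: "real \<Rightarrow> real \<Rightarrow> real \<Rightarrow> nat \<Rightarrow> real" where
  "alpha2 M mu a n = (2 * real n + 1) / (mu * M) * sqrt (1 - a\<^sup>2 / M\<^sup>2)"

definition alphaC :: "real \<Rightarrow> real \<Rightarrow> real \<Rightarrow> nat \<Rightarrow> nat \<Rightarrow> complex" where
  "alphaC M mu a n m = complex_of_real (alpha1 M mu a m) - \<i> * complex_of_real (alpha2 M mu a n)"

definition eps :: "real \<Rightarrow> real \<Rightarrow> real" where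
  "eps M a = 2 * sqrt (1 - a\<^sup>2 / M\<^sup>2)"

definition beta :: "real \<Rightarrow> real \<Rightarrow> nat \<Rightarrow> real" where
  "beta M mu l = 6 - real l * (real l + 1) / (mu\<^sup>2 * M\<^sup>2)"

definition qfun :: "real \<Rightarrow> real \<Rightarrow> real \<Rightarrow> nat \<Rightarrow> nat \<Rightarrow> nat \<Rightarrow> complex \<Rightarrow> complex" where
  "qfun M mu a n m k z =
     (let e = complex_of_real (eps M a); b = complex_of_real (beta M mu (m + k));
          al = alphaC M mu a n m
      in z ^ 4 + 4 * z / (b + e) * ((2 + e) * (z\<^sup>2 + 1) + al * (z\<^sup>2 - 1))
         + 2 * ((16 - b + 3 * e) / (b + e)) * z\<^sup>2 + 1)"

text \<open>The same q as a polynomial, so that root multiplicities (order) are available.\<close>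
definition qpoly :: "real \<Rightarrow> real \<Rightarrow> real \<Rightarrow> nat \<Rightarrow> nat \<Rightarrow> nat \<Rightarrow> complex poly" where
  "qpoly M mu a n m k =
     (let e = complex_of_real (eps M a); b = complex_of_real (beta M mu (m + k));
          al = alphaC M mu a n m; c = 4 / (b + e)
      in [: 1, c * (2 + e - al), 2 * ((16 - b + 3 * e) / (b + e)), c * (2 + e + al), 1 :])"

lemma poly_qpoly: "poly (qpoly M mu a n m k) z = qfun M mu a n m k z"
  unfolding qpoly_def qfun_def Let_def
  by (simp add: algebra_simps power2_eq_square power4_eq_xxxx add_divide_distrib diff_divide_distrib)

end

theory Submission
  imports Defs "HOL-Complex_Analysis.Complex_Analysis"
begin

text \<open>
  Write q = z^4 + c (2 + eps - alpha) z + D z^2 + c (2 + eps + alpha) z^3 + 1 with c = 4/(beta + eps) and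
  D = 2 (16 - beta + 3 eps)/(beta + eps). The two bounds on mu M say precisely that beta > 0 (so c, D > 0)
  and alpha1 > 2 + eps. Then q takes no value in the closed negative real half-line on either closed
  positive half-axis: Im q(x) = c alpha2 x (1 - x^2), which vanishes only at x = 0 and x = 1 where q is
  positive, and Im q(i y) < 0 for y > 0. As z^4 + 1 is positive on both half-axes and dominates
  q - (z^4 + 1) far away, the straight-line homotopy between q and z^4 + 1 does not vanish on the
  boundary of the triangle with vertices 0, R, i R for large R. By the argument principle, q has as many
  roots in the open first quadrant as z^4 + 1, namely one (at exp (i pi / 4)).

  Non-emptiness of the interval is elementary: with l (l + 1) = m^2 (1 + x), the bound on m gives
  x \<le> 1/2, and the bound on a/M then rearranges into the claimed inequality.
\<close>

section \<open>Roots of polynomials and winding numbers\<close>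

lemma zorder_poly_eq_order:
  fixes p :: "complex poly"
  assumes "p \<noteq> 0"
  shows "zorder (poly p) z = int (order z p)"
proof -
  obtain r where r: "p = [:- z, 1:] ^ order z p * r" and "\<not> [:- z, 1:] dvd r"
    using order_decomp[OF assms] by blast
  then have "poly r z \<noteq> 0" using poly_eq_0_iff_dvd by blast
  show ?thesis
  proof (rule zorder_eqI[of UNIV z "poly r"])
    fix w :: complex
    have "poly p w = (w - z) ^ order z p * poly r w"
      by (subst r) (simp add: poly_power)
    then show "poly p w = poly r w * (w - z) powi int (order z p)"
      by (simp add: power_int_of_nat mult.commute)
  qed (use \<open>poly r z \<noteq> 0\<close> in \<open>auto intro: holomorphic_intros\<close>)
qed

lemma winding_number_poly_comp:
  fixes p :: "complex poly" and \<gamma> :: "real \<Rightarrow> complex"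
  assumes "p \<noteq> 0" "valid_path \<gamma>" "pathfinish \<gamma> = pathstart \<gamma>"
    and "\<And>z. z \<in> path_image \<gamma> \<Longrightarrow> poly p z \<noteq> 0"
  shows "winding_number (poly p \<circ> \<gamma>) 0 =
         (\<Sum>z\<in>{z. poly p z = 0}. winding_number \<gamma> z * of_nat (order z p))"
proof -
  have "valid_path (poly p \<circ> \<gamma>)"
    by (rule valid_path_compose_holomorphic[of _ _ UNIV]) (use assms in \<open>auto intro: holomorphic_intros\<close>)
  moreover have "0 \<notin> path_image (poly p \<circ> \<gamma>)"
    using assms(4) by (auto simp: path_image_compose)
  ultimately have "winding_number (poly p \<circ> \<gamma>) 0 =
                   contour_integral (poly p \<circ> \<gamma>) (\<lambda>w. 1 / w) / (2 * pi * \<i>)"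
    by (simp add: winding_number_valid_path)
  also have "contour_integral (poly p \<circ> \<gamma>) (\<lambda>w. 1 / w) =
             contour_integral \<gamma> (\<lambda>w. deriv (poly p) w * (1 / poly p w))"
    by (rule contour_integral_comp_analyticW[of _ UNIV])
       (use assms in \<open>auto simp: analytic_on_holomorphic intro!: exI[of _ UNIV] holomorphic_intros\<close>)
  also have "\<dots> = contour_integral \<gamma> (\<lambda>w. deriv (poly p) w * 1 / poly p w)"
    by simp
  also have "\<dots> = 2 * pi * \<i> *
      (\<Sum>z\<in>{w\<in>UNIV. poly p w = 0 \<or> w \<in> {}}. winding_number \<gamma> z * 1 * zorder (poly p) z)"
    by (rule argument_principle) (use assms poly_roots_finite in \<open>auto intro: holomorphic_intros\<close>)
  finally show ?thesis
    by (simp add: zorder_poly_eq_order[OF assms(1)] comp_def)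
qed

lemma norm_poly_le_coeff_sum:
  fixes p :: "'a::real_normed_field poly"
  assumes "degree p \<le> n" "1 \<le> norm z"
  shows "norm (poly p z) \<le> (\<Sum>i\<le>n. norm (coeff p i)) * norm z ^ n"
proof -
  have "poly p z = (\<Sum>i\<le>n. coeff p i * z ^ i)"
    by (subst poly_as_sum_of_monoms'[OF assms(1), symmetric]) (simp add: poly_sum poly_monom)
  also have "norm \<dots> \<le> (\<Sum>i\<le>n. norm (coeff p i) * norm z ^ i)"
    by (rule order.trans[OF norm_sum]) (simp add: norm_mult norm_power)
  also have "\<dots> \<le> (\<Sum>i\<le>n. norm (coeff p i) * norm z ^ n)"
    by (intro sum_mono mult_left_mono power_increasing) (use assms(2) in auto)
  finally show ?thesis by (simp add: sum_distrib_right)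
qed

lemma norm_poly_less_norm_power_plus_one:
  fixes r :: "'a::real_normed_field poly"
  assumes "degree r < n" and large: "(\<Sum>i<n. norm (coeff r i)) + 2 \<le> norm z"
  shows "norm (poly r z) < norm (z ^ n + 1)"
proof -
  define C where "C = (\<Sum>i<n. norm (coeff r i))"
  obtain m where n: "n = Suc m" using assms(1) by (cases n) auto
  have "C \<ge> 0" unfolding C_def by (simp add: sum_nonneg)
  then have z2: "2 \<le> norm z" using large unfolding C_def by linarith
  then have "1 \<le> norm z ^ m" by (simp add: one_le_power)
  have "norm (poly r z) \<le> C * norm z ^ m"
    using norm_poly_le_coeff_sum[of r m z] assms(1) z2
    by (simp add: C_def n lessThan_Suc_atMost)
  also have "\<dots> \<le> (norm z - 2) * norm z ^ m"
    using large by (intro mult_right_mono) (auto simp: C_def)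
  also have "\<dots> < norm z ^ n - 1"
    using \<open>1 \<le> norm z ^ m\<close> by (simp add: n algebra_simps)
  also have "\<dots> \<le> norm (z ^ n + 1)"
    using norm_triangle_ineq4[of "z ^ n + 1" 1] by (simp add: norm_power)
  finally show ?thesis .
qed

lemma monic_poly_close_to_power_plus_one:
  fixes p :: "complex poly"
  assumes "degree p = n" "lead_coeff p = 1" "0 < n"
  obtains C where "0 < C" "\<And>z. C \<le> norm z \<Longrightarrow> norm (poly p z - (z ^ n + 1)) < norm (z ^ n + 1)"
proof -
  let ?r = "p - (monom 1 n + 1)"
  have "degree ?r \<le> n - 1"
    using assms by (intro degree_le) (auto simp: coeff_monom coeff_eq_0)
  then have "degree ?r < n" using assms(3) by linarith
  moreover have "0 < (\<Sum>i<n. norm (coeff ?r i)) + 2" by (simp add: sum_nonneg add_nonneg_pos)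
  ultimately show thesis
    using that norm_poly_less_norm_power_plus_one[of ?r n] by (simp add: poly_monom)
qed

lemma zero_notin_closed_segment_of_real:
  fixes u :: complex
  assumes "0 < r" "u \<notin> \<real>\<^sub>\<le>\<^sub>0"
  shows "0 \<notin> closed_segment (of_real r) u"
proof
  assume "0 \<in> closed_segment (of_real r) u"
  then obtain t where t: "0 \<le> t" "t \<le> 1" "(1 - t) *\<^sub>R of_real r + t *\<^sub>R u = 0"
    by (auto simp: in_segment)
  then have "t \<noteq> 0" using assms(1) by auto
  with t have "u = of_real (- ((1 - t) * r / t))"
    by (auto simp: scaleR_conv_of_real field_simps eq_neg_iff_add_eq_0)
  moreover have "0 \<le> (1 - t) * r / t"
    using t assms(1) by simp
  ultimately show False using assms(2) by (metis neg_le_0_iff_le nonpos_Reals_of_real_iff)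
qed

lemma zero_notin_closed_segment_if_norm_diff_less:
  fixes u v :: "'a::real_normed_vector"
  assumes "norm (u - v) < norm v"
  shows "0 \<notin> closed_segment v u"
proof
  assume "0 \<in> closed_segment v u"
  then obtain t where t: "0 \<le> t" "t \<le> 1" "v = - (t *\<^sub>R (u - v))"
    by (auto simp: in_segment algebra_simps eq_neg_iff_add_eq_0)
  then have "norm v = norm (t *\<^sub>R (u - v))" by (metis norm_minus_cancel)
  also have "\<dots> = t * norm (u - v)" using t by simp
  also have "\<dots> \<le> norm (u - v)" using t by (simp add: mult_left_le_one_le)
  finally show False using assms by simp
qed

section \<open>Counting roots in the open first quadrant\<close>

definition quadrant_triangle :: "real \<Rightarrow> real \<Rightarrow> complex" where
  "quadrant_triangle R =
     linepath 0 (of_real R) +++ linepath (of_real R) (\<i> * of_real R) +++ linepath (\<i> * of_real R) 0"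

lemma valid_path_quadrant_triangle: "valid_path (quadrant_triangle R)"
  and pathfinish_quadrant_triangle: "pathfinish (quadrant_triangle R) = pathstart (quadrant_triangle R)"
  by (auto simp: quadrant_triangle_def)

lemma path_image_quadrant_triangle:
  "path_image (quadrant_triangle R) = closed_segment 0 (of_real R) \<union>
     closed_segment (of_real R) (\<i> * of_real R) \<union> closed_segment (\<i> * of_real R) 0"
  by (auto simp: quadrant_triangle_def path_image_join)

lemma path_image_quadrant_triangle_cases:
  assumes "z \<in> path_image (quadrant_triangle R)" "0 \<le> R"
  obtains x where "0 \<le> x" "z = of_real x"
    | y where "0 \<le> y" "z = \<i> * of_real y"
    | "Re z + Im z = R"
  using assms unfolding path_image_quadrant_triangle
proof (elim UnE)
  assume "z \<in> closed_segment 0 (of_real R)"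
  then obtain u where "0 \<le> u" "z = of_real (u * R)"
    by (auto simp: in_segment scaleR_conv_of_real)
  with that(1)[of "u * R"] assms(2) show thesis by simp
next
  assume "z \<in> closed_segment (\<i> * of_real R) 0"
  then obtain u where "u \<le> 1" "z = \<i> * of_real ((1 - u) * R)"
    by (auto simp: in_segment scaleR_conv_of_real algebra_simps)
  with that(2)[of "(1 - u) * R"] assms(2) show thesis by simp
next
  assume "z \<in> closed_segment (of_real R) (\<i> * of_real R)"
  then have "Re z + Im z = R"
    by (auto simp: in_segment scaleR_conv_of_real complex_eq_iff algebra_simps)
  with that(3) show thesis .
qed

lemma winding_number_quadrant_triangle_inside:
  assumes "0 < Re z" "0 < Im z" "Re z + Im z < R"
  shows "winding_number (quadrant_triangle R) z = 1"
proof -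
  have "R > 0" using assms by simp
  have "z \<notin> path_image (quadrant_triangle R)"
    using assms by (auto elim: path_image_quadrant_triangle_cases)
  moreover have "z \<in> convex hull {0, of_real R, \<i> * of_real R}"
    unfolding convex_hull_3
    by (rule CollectI, rule exI[of _ "1 - (Re z + Im z) / R"], rule exI[of _ "Re z / R"],
        rule exI[of _ "Im z / R"]) (use assms in \<open>auto simp: complex_eq_iff field_simps\<close>)
  ultimately have "z \<in> interior (convex hull {0, of_real R, \<i> * of_real R})"
    using \<open>R > 0\<close> by (simp add: interior_of_triangle path_image_quadrant_triangle)
  then show ?thesis
    using winding_number_triangle assms unfolding quadrant_triangle_def by fastforce
qed

lemma winding_number_quadrant_triangle_outside:
  assumes "0 < R" "\<not> (0 \<le> Re z \<and> 0 \<le> Im z \<and> Re z + Im z \<le> R)"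
  shows "winding_number (quadrant_triangle R) z = 0"
proof -
  define T where "T = {z. 0 \<le> Re z} \<inter> {z. 0 \<le> Im z} \<inter> {z. inner (1 + \<i>) z \<le> R}"
  have "convex T" unfolding T_def
    by (intro convex_Int convex_halfspace_Re_ge convex_halfspace_Im_ge convex_halfspace_le)
  have T_iff: "z \<in> T \<longleftrightarrow> 0 \<le> Re z \<and> 0 \<le> Im z \<and> Re z + Im z \<le> R" for z
    by (simp add: T_def inner_complex_def)
  have "path_image (quadrant_triangle R) \<subseteq> T"
    unfolding path_image_quadrant_triangle
    using closed_segment_subset[OF _ _ \<open>convex T\<close>] assms(1) by (auto simp: T_iff)
  then show ?thesis
    using winding_number_zero_outside[of _ T z] \<open>convex T\<close> assms
    by (auto simp: T_iff valid_path_imp_path valid_path_quadrant_triangle pathfinish_quadrant_triangle)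
qed

lemma Re_plus_Im_le_2_norm: "Re z + Im z \<le> 2 * norm z"
  using complex_Re_le_cmod[of z] abs_Im_le_cmod[of z] by linarith

lemma winding_number_poly_quadrant_triangle:
  fixes p :: "complex poly"
  assumes "p \<noteq> 0" and R: "0 < R"
    and real_axis: "\<And>x. 0 \<le> x \<Longrightarrow> poly p (of_real x) \<noteq> 0"
    and imag_axis: "\<And>y. 0 \<le> y \<Longrightarrow> poly p (\<i> * of_real y) \<noteq> 0"
    and roots_small: "\<And>z. poly p z = 0 \<Longrightarrow> 2 * norm z < R"
  shows "winding_number (poly p \<circ> quadrant_triangle R) 0 =
         of_nat (\<Sum>z\<in>{z. Re z > 0 \<and> Im z > 0 \<and> poly p z = 0}. order z p)"
proof -
  let ?roots = "{z. poly p z = 0}" and ?Q = "{z. Re z > 0 \<and> Im z > 0 \<and> poly p z = 0}"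
  let ?f = "\<lambda>z. winding_number (quadrant_triangle R) z * of_nat (order z p)"
  have off_axes: "0 < Re z \<and> 0 < Im z" if "poly p z = 0" "0 \<le> Re z" "0 \<le> Im z" for z
  proof -
    have "Re z \<noteq> 0"
    proof
      assume "Re z = 0"
      then have "z = \<i> * of_real (Im z)" by (simp add: complex_eq_iff)
      with that imag_axis[of "Im z"] show False by simp
    qed
    moreover have "Im z \<noteq> 0"
    proof
      assume "Im z = 0"
      then have "z = of_real (Re z)" by (simp add: complex_eq_iff)
      with that real_axis[of "Re z"] show False by simp
    qed
    ultimately show ?thesis using that by simp
  qed
  have "poly p z \<noteq> 0" if "z \<in> path_image (quadrant_triangle R)" for z
    using that less_imp_le[OF R]
  proof (cases rule: path_image_quadrant_triangle_cases)
    case 3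
    then show ?thesis using roots_small[of z] Re_plus_Im_le_2_norm[of z] by linarith
  qed (use real_axis imag_axis in auto)
  then have "winding_number (poly p \<circ> quadrant_triangle R) 0 = sum ?f ?roots"
    by (intro winding_number_poly_comp assms valid_path_quadrant_triangle pathfinish_quadrant_triangle)
  also have "\<dots> = sum ?f ?Q"
  proof (rule sum.mono_neutral_right)
    show "finite ?roots" using poly_roots_finite[OF assms(1)] .
    show "\<forall>z\<in>?roots - ?Q. ?f z = 0"
      using off_axes by (auto intro!: winding_number_quadrant_triangle_outside[OF R])
  qed auto
  also have "\<dots> = sum (\<lambda>z. of_nat (order z p)) ?Q"
  proof (rule sum.cong[OF refl])
    fix z assume "z \<in> ?Q"
    then show "?f z = of_nat (order z p)"
      using roots_small[of z] Re_plus_Im_le_2_norm[of z] winding_number_quadrant_triangle_inside[of z R] by simp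
  qed
  finally show ?thesis by simp
qed

lemma sum_order_first_quadrant_eq_if_homotopic:
  fixes p q :: "complex poly"
  assumes "p \<noteq> 0" "q \<noteq> 0" "0 < R"
    and roots_small: "\<And>z. poly p z = 0 \<or> poly q z = 0 \<Longrightarrow> 2 * norm z < R"
    and real_axis: "\<And>x. 0 \<le> x \<Longrightarrow> 0 \<notin> closed_segment (poly q (of_real x)) (poly p (of_real x))"
    and imag_axis: "\<And>y. 0 \<le> y \<Longrightarrow> 0 \<notin> closed_segment (poly q (\<i> * of_real y)) (poly p (\<i> * of_real y))"
    and diagonal: "\<And>z. Re z + Im z = R \<Longrightarrow> 0 \<notin> closed_segment (poly q z) (poly p z)"
  shows "(\<Sum>z\<in>{z. Re z > 0 \<and> Im z > 0 \<and> poly p z = 0}. order z p) =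
         (\<Sum>z\<in>{z. Re z > 0 \<and> Im z > 0 \<and> poly q z = 0}. order z q)"
proof -
  have "0 \<notin> closed_segment (poly q z) (poly p z)" if "z \<in> path_image (quadrant_triangle R)" for z
    using that less_imp_le[OF \<open>0 < R\<close>]
    by (cases rule: path_image_quadrant_triangle_cases) (use real_axis imag_axis diagonal in auto)
  moreover have "path (quadrant_triangle R)"
    by (simp add: valid_path_imp_path valid_path_quadrant_triangle)
  ultimately have "winding_number (poly p \<circ> quadrant_triangle R) 0 =
                   winding_number (poly q \<circ> quadrant_triangle R) 0"
    by (intro winding_number_loops_linear_eq)
       (auto simp: path_image_def pathfinish_compose pathstart_compose pathfinish_quadrant_triangle
          intro!: path_continuous_image continuous_intros)
  moreover have "winding_number (poly p \<circ> quadrant_triangle R) 0 =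
                  of_nat (\<Sum>z\<in>{z. Re z > 0 \<and> Im z > 0 \<and> poly p z = 0}. order z p)"
    using real_axis imag_axis roots_small
    by (intro winding_number_poly_quadrant_triangle \<open>p \<noteq> 0\<close> \<open>0 < R\<close>) (metis ends_in_segment(2))+
  moreover have "winding_number (poly q \<circ> quadrant_triangle R) 0 =
                  of_nat (\<Sum>z\<in>{z. Re z > 0 \<and> Im z > 0 \<and> poly q z = 0}. order z q)"
    using real_axis imag_axis roots_small
    by (intro winding_number_poly_quadrant_triangle \<open>q \<noteq> 0\<close> \<open>0 < R\<close>) (metis ends_in_segment(1))+
  ultimately show ?thesis
    by (metis of_nat_eq_iff)
qed

lemma first_quadrant_roots_power4_plus_one:
  "{z. Re z > 0 \<and> Im z > 0 \<and> z ^ 4 + 1 = 0} = {Complex (sqrt 2 / 2) (sqrt 2 / 2)}"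
proof (intro equalityI subsetI)
  fix z assume "z \<in> {z. Re z > 0 \<and> Im z > 0 \<and> z ^ 4 + 1 = 0}"
  then have pos: "Re z > 0" "Im z > 0" and root: "z ^ 4 + 1 = 0" by auto
  have "(z\<^sup>2 - \<i>) * (z\<^sup>2 + \<i>) = z ^ 4 + 1" by (simp add: algebra_simps eval_nat_numeral)
  moreover have "Im (z\<^sup>2) > 0" using pos by (simp add: power2_eq_square)
  then have "z\<^sup>2 + \<i> \<noteq> 0" by (auto simp: complex_eq_iff)
  ultimately have "z\<^sup>2 = \<i>" using root by simp
  then have "Re z ^ 2 = Im z ^ 2" and prod: "2 * Re z * Im z = 1"
    by (auto simp: complex_eq_iff power2_eq_square algebra_simps)
  then have "Re z = Im z" using pos by (simp add: power2_eq_iff_nonneg)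
  with prod have "Re z ^ 2 = (sqrt 2 / 2) ^ 2" by (simp add: power2_eq_square power_divide)
  then have "Re z = sqrt 2 / 2" using pos by (simp add: power2_eq_iff_nonneg)
  with \<open>Re z = Im z\<close> show "z \<in> {Complex (sqrt 2 / 2) (sqrt 2 / 2)}"
    by (simp add: complex_eq_iff)
next
  fix z assume "z \<in> {Complex (sqrt 2 / 2) (sqrt 2 / 2)}"
  moreover have "Complex (sqrt 2 / 2) (sqrt 2 / 2) ^ 2 = \<i>"
    by (simp add: complex_eq_iff power2_eq_square)
  ultimately have "z\<^sup>2 = \<i>" by simp
  then have "z ^ 4 = -1" by (metis power_mult numeral_Bit0 numeral_One mult_2 power2_i)
  then show "z \<in> {z. Re z > 0 \<and> Im z > 0 \<and> z ^ 4 + 1 = 0}"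
    using \<open>z \<in> _\<close> by simp
qed

lemma sum_order_first_quadrant_power4_plus_one:
  "(\<Sum>z\<in>{z. Re z > 0 \<and> Im z > 0 \<and> poly (monom 1 4 + 1) z = 0}.
     order z (monom 1 4 + 1 :: complex poly)) = 1"
proof -
  let ?G = "monom 1 4 + 1 :: complex poly"
  have "coeff ?G 4 = 1" by (simp add: coeff_monom)
  then have "?G \<noteq> 0" by (metis coeff_0 zero_neq_one)
  have "poly (pderiv ?G) z = 4 * z ^ 3" for z
    by (simp add: pderiv_add pderiv_monom poly_monom)
  then have "rsquarefree ?G"
    by (auto simp: rsquarefree_roots poly_monom)
  moreover have "poly ?G (Complex (sqrt 2 / 2) (sqrt 2 / 2)) = 0"
    using first_quadrant_roots_power4_plus_one by (auto simp: poly_monom)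
  ultimately show ?thesis
    using rsquarefree_root_order[OF _ _ \<open>?G \<noteq> 0\<close>] first_quadrant_roots_power4_plus_one
    by (simp add: poly_monom)
qed

lemma sum_order_first_quadrant_monic_quartic:
  fixes p :: "complex poly"
  assumes "degree p = 4" "lead_coeff p = 1"
    and real_axis: "\<And>x. 0 \<le> x \<Longrightarrow> poly p (of_real x) \<notin> \<real>\<^sub>\<le>\<^sub>0"
    and imag_axis: "\<And>y. 0 \<le> y \<Longrightarrow> poly p (\<i> * of_real y) \<notin> \<real>\<^sub>\<le>\<^sub>0"
  shows "(\<Sum>z\<in>{z. Re z > 0 \<and> Im z > 0 \<and> poly p z = 0}. order z p) = 1"
proof -
  define G where "G = monom 1 4 + (1 :: complex poly)"
  have poly_G: "poly G z = z ^ 4 + 1" for z by (simp add: G_def poly_monom)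
  obtain C where "0 < C" and dominant: "\<And>z. C \<le> norm z \<Longrightarrow> norm (poly p z - poly G z) < norm (poly G z)"
    using monic_poly_close_to_power_plus_one[OF assms(1,2)] unfolding poly_G by auto
  have G_axes: "poly G (of_real x) = of_real (x ^ 4 + 1)" "poly G (\<i> * of_real x) = of_real (x ^ 4 + 1)"
    "0 < x ^ 4 + 1" for x
    by (simp_all add: poly_G power_mult_distrib add_nonneg_pos zero_le_power_eq)
  have "(\<Sum>z\<in>{z. Re z > 0 \<and> Im z > 0 \<and> poly p z = 0}. order z p) =
        (\<Sum>z\<in>{z. Re z > 0 \<and> Im z > 0 \<and> poly G z = 0}. order z G)"
  proof (rule sum_order_first_quadrant_eq_if_homotopic[where R = "2 * C"])
    show "p \<noteq> 0" "G \<noteq> 0" using assms(1) poly_G[of 0] by auto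
    show "2 * norm z < 2 * C" if "poly p z = 0 \<or> poly G z = 0" for z
      using dominant[of z] that by force
    show "0 \<notin> closed_segment (poly G (of_real x)) (poly p (of_real x))" if "0 \<le> x" for x
      unfolding G_axes(1) using G_axes(3) real_axis[OF that] by (rule zero_notin_closed_segment_of_real)
    show "0 \<notin> closed_segment (poly G (\<i> * of_real y)) (poly p (\<i> * of_real y))" if "0 \<le> y" for y
      unfolding G_axes(2) using G_axes(3) imag_axis[OF that] by (rule zero_notin_closed_segment_of_real)
    show "0 \<notin> closed_segment (poly G z) (poly p z)" if "Re z + Im z = 2 * C" for z
      using dominant[of z] Re_plus_Im_le_2_norm[of z] that
      by (intro zero_notin_closed_segment_if_norm_diff_less) simp
  qed (use \<open>0 < C\<close> in simp)
  also have "\<dots> = 1"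
    unfolding G_def by (rule sum_order_first_quadrant_power4_plus_one)
  finally show ?thesis .
qed

section \<open>The quartic q\<close>

lemma sum_order_first_quadrant_quartic:
  fixes c D e \<alpha>\<^sub>1 \<alpha>\<^sub>2 :: real
  defines "\<alpha> \<equiv> complex_of_real \<alpha>\<^sub>1 - \<i> * complex_of_real \<alpha>\<^sub>2"
  defines "p \<equiv> [:1, of_real c * (2 + of_real e - \<alpha>), of_real D, of_real c * (2 + of_real e + \<alpha>), 1:]"
  assumes "0 < c" "0 < D" "0 \<le> e" "2 + e < \<alpha>\<^sub>1" "0 < \<alpha>\<^sub>2"
  shows "(\<Sum>z\<in>{z. Re z > 0 \<and> Im z > 0 \<and> poly p z = 0}. order z p) = 1"
proof (rule sum_order_first_quadrant_monic_quartic)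
  show "degree p = 4" "lead_coeff p = 1" by (simp_all add: p_def)
next
  fix x :: real assume "0 \<le> x"
  have Im: "Im (poly p (of_real x)) = c * \<alpha>\<^sub>2 * x * (1 - x\<^sup>2)"
    and Re: "Re (poly p (of_real x)) =
               1 + c * (2 + e - \<alpha>\<^sub>1) * x + D * x\<^sup>2 + c * (2 + e + \<alpha>\<^sub>1) * x ^ 3 + x ^ 4"
    by (simp_all add: p_def \<alpha>_def algebra_simps power2_eq_square eval_nat_numeral flip: of_real_power)
  show "poly p (of_real x) \<notin> \<real>\<^sub>\<le>\<^sub>0"
  proof
    assume "poly p (of_real x) \<in> \<real>\<^sub>\<le>\<^sub>0"
    then have "x * (1 - x\<^sup>2) = 0" "Re (poly p (of_real x)) \<le> 0"
      using \<open>0 < c\<close> \<open>0 < \<alpha>\<^sub>2\<close> by (auto simp: complex_nonpos_Reals_iff Im)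
    moreover have "x = 0 \<or> x = 1"
      using \<open>0 \<le> x\<close> calculation(1) by (auto simp: power2_eq_1_iff)
    moreover have "0 < c * (2 + e)" using \<open>0 < c\<close> \<open>0 \<le> e\<close> by simp
    ultimately show False
      using \<open>0 < D\<close> unfolding Re by (auto simp: algebra_simps)
  qed
next
  fix y :: real assume "0 \<le> y"
  have Im: "Im (poly p (\<i> * of_real y)) = c * (2 + e - \<alpha>\<^sub>1) * y - c * (2 + e + \<alpha>\<^sub>1) * y ^ 3"
    by (simp add: p_def \<alpha>_def algebra_simps power2_eq_square eval_nat_numeral flip: of_real_power)
  show "poly p (\<i> * of_real y) \<notin> \<real>\<^sub>\<le>\<^sub>0"
  proof (cases "y = 0")
    case False
    with \<open>0 \<le> y\<close> have "0 < y" by simp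
    have "c * (2 + e - \<alpha>\<^sub>1) * y < 0" "0 < c * (2 + e + \<alpha>\<^sub>1) * y ^ 3"
      using \<open>0 < c\<close> \<open>0 < y\<close> \<open>0 \<le> e\<close> \<open>2 + e < \<alpha>\<^sub>1\<close>
      by (simp_all add: mult_pos_neg mult_neg_pos)
    then have "Im (poly p (\<i> * of_real y)) \<noteq> 0" unfolding Im by linarith
    then show ?thesis by (simp add: complex_nonpos_Reals_iff)
  qed (simp add: p_def)
qed

text \<open>The left-hand side is l (l + 1) / m^2 - 1 for l = m + k.\<close>

lemma shift_ratio_le_half:
  fixes m k :: real
  assumes "0 \<le> k" "2 * k + 1 + sqrt (6 * k\<^sup>2 + 6 * k + 1) \<le> m"
  shows "(1 / m) * (2 * k + 1 + k * (k + 1) / m) \<le> 1 / 2"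
proof -
  have "1 \<le> sqrt (6 * k\<^sup>2 + 6 * k + 1)" using assms(1) by simp
  then have "0 < m" using assms by linarith
  have "6 * k\<^sup>2 + 6 * k + 1 \<le> (m - (2 * k + 1))\<^sup>2"
    using assms(2) by (intro sqrt_le_D) linarith
  then have "2 * ((2 * k + 1) * m + k * (k + 1)) \<le> m\<^sup>2"
    by (simp add: power2_eq_square algebra_simps)
  then show ?thesis
    using \<open>0 < m\<close> by (simp add: field_simps power2_eq_square)
qed

lemma sqrt_lt_of_ratio_bound:
  fixes x A :: real
  assumes "0 \<le> x" "x \<le> 1 / 2" "A \<le> 1"
    and A: "(2 * sqrt 6 / 5) * (sqrt (1 + x) / (1 + (2 / 5) * x)) < A"
  shows "sqrt ((1 + x) / 6) < A / (2 * (1 + sqrt (1 - A\<^sup>2)))"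
proof -
  define s where "s = sqrt (1 - A\<^sup>2)"
  have "0 \<le> 2 * sqrt 6 * sqrt (1 + x)" using assms(1) by simp
  moreover have "2 * sqrt 6 * sqrt (1 + x) < A * (5 + 2 * x)"
    using A assms(1) by (simp add: field_simps)
  ultimately have "(2 * sqrt 6 * sqrt (1 + x))\<^sup>2 < (A * (5 + 2 * x))\<^sup>2"
    by (simp add: power_strict_mono)
  then have A2: "24 * (1 + x) < A\<^sup>2 * (5 + 2 * x)\<^sup>2"
    using assms(1) by (simp add: power_mult_distrib)
  have "0 \<le> (2 * sqrt 6 / 5) * (sqrt (1 + x) / (1 + (2 / 5) * x))" using assms(1) by simp
  then have "0 < A" using A by linarith
  then have "A\<^sup>2 \<le> 1" using assms(3) by (simp add: power_le_one)
  then have s2: "s\<^sup>2 = 1 - A\<^sup>2" and "0 \<le> s" by (simp_all add: s_def)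
  have "(s * (5 + 2 * x))\<^sup>2 = (5 + 2 * x)\<^sup>2 - A\<^sup>2 * (5 + 2 * x)\<^sup>2"
    by (simp add: power_mult_distrib s2 left_diff_distrib)
  also have "\<dots> < (5 + 2 * x)\<^sup>2 - 24 * (1 + x)" using A2 by simp
  also have "\<dots> = (1 - 2 * x)\<^sup>2" by (simp add: power2_eq_square algebra_simps)
  finally have "(s * (5 + 2 * x))\<^sup>2 < (1 - 2 * x)\<^sup>2" .
  then have "s * (5 + 2 * x) < 1 - 2 * x"
    by (rule power2_less_imp_less) (use assms(2) in simp)
  then have "2 * (1 + x) * (1 + s) < 3 * (1 - s)"
    by (simp add: algebra_simps)
  then have "2 * (1 + x) * (1 + s) * (1 + s) < 3 * (1 - s) * (1 + s)"
    by (rule mult_strict_right_mono) (use \<open>0 \<le> s\<close> in simp)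
  then have "2 * (1 + x) * (1 + s)\<^sup>2 < 3 * A\<^sup>2"
    using s2 by (simp add: power2_eq_square algebra_simps)
  then have "(1 + x) / 6 < A\<^sup>2 / (4 * (1 + s)\<^sup>2)"
    using \<open>0 \<le> s\<close> by (simp add: field_simps)
  also have "A\<^sup>2 / (4 * (1 + s)\<^sup>2) = (A / (2 * (1 + s)))\<^sup>2"
    by (simp add: power_divide power2_eq_square algebra_simps)
  finally have "(1 + x) / 6 < (A / (2 * (1 + s)))\<^sup>2" .
  moreover have "0 \<le> A / (2 * (1 + s))" using \<open>0 < A\<close> \<open>0 \<le> s\<close> by simp
  ultimately show ?thesis
    unfolding s_def[symmetric] by (simp add: real_less_lsqrt)
qed

lemma beta_pos:
  assumes "sqrt (real l * (real l + 1) / 6) < mu * M"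
  shows "0 < beta M mu l"
proof -
  have "0 \<le> sqrt (real l * (real l + 1) / 6)" by simp
  then have "0 < mu * M" using assms by linarith
  then have "0 < (mu * M)\<^sup>2" by (rule zero_less_power)
  have "(sqrt (real l * (real l + 1) / 6))\<^sup>2 < (mu * M)\<^sup>2"
    by (rule power_strict_mono[OF assms]) simp_all
  then have "real l * (real l + 1) / (mu * M)\<^sup>2 < 6"
    using \<open>0 < (mu * M)\<^sup>2\<close> by (simp add: pos_divide_less_eq)
  then show ?thesis
    by (simp add: beta_def power_mult_distrib)
qed

lemma eps_add_2_lt_alpha1:
  assumes "0 < M" "0 < mu" "\<bar>a\<bar> \<le> M"
    and "mu * M < (real m * a / M) / (2 * (1 + sqrt (1 - a\<^sup>2 / M\<^sup>2)))"
  shows "2 + eps M a < alpha1 M mu a m"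
proof -
  have "a\<^sup>2 \<le> M\<^sup>2" using abs_le_square_iff[of a M] assms(1,3) by simp
  then have "0 < 2 * (1 + sqrt (1 - a\<^sup>2 / M\<^sup>2))" using assms(1) by (simp add: add_pos_nonneg)
  then have "mu * M * (2 * (1 + sqrt (1 - a\<^sup>2 / M\<^sup>2))) < real m * a / M"
    using assms(4) by (simp only: pos_less_divide_eq)
  then have "(2 + eps M a) * (mu * M) < real m * a / M"
    by (simp add: eps_def algebra_simps)
  then have "2 + eps M a < real m * a / M / (mu * M)"
    using assms(1,2) by (simp add: pos_less_divide_eq mult.commute)
  also have "\<dots> = alpha1 M mu a m" by (simp add: alpha1_def power2_eq_square)
  finally show ?thesis .
qed

lemma alpha2_pos:
  assumes "0 < M" "0 < mu" "\<bar>a\<bar> < M"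
  shows "0 < alpha2 M mu a n"
proof -
  have "a\<^sup>2 < M\<^sup>2" using abs_le_square_iff[of M a] assms(1,3) by simp
  then show ?thesis using assms(1,2) by (simp add: alpha2_def)
qed

lemma sqrt_lt_interval_upper:
  fixes M a :: real and m k :: nat
  assumes "0 < M" "\<bar>a\<bar> \<le> M"
    and m: "2 * real k + 1 + sqrt (6 * (real k)\<^sup>2 + 6 * real k + 1) \<le> real m"
    and A: "a / M > (2 * sqrt 6 / 5) *
           (sqrt (1 + (1 / real m) * (2 * real k + 1 + real k * (real k + 1) / real m))
            / (1 + ((2 / 5) / real m) * (2 * real k + 1 + real k * (real k + 1) / real m)))"
  shows "sqrt (real (m + k) * (real (m + k) + 1) / 6)
           < (real m * a / M) / (2 * (1 + sqrt (1 - a\<^sup>2 / M\<^sup>2)))"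
proof -
  define x where "x = (1 / real m) * (2 * real k + 1 + real k * (real k + 1) / real m)"
  have "1 \<le> sqrt (6 * (real k)\<^sup>2 + 6 * real k + 1)" by simp
  then have "0 < real m" using m by linarith
  then have "0 \<le> x" by (simp add: x_def)
  have "x \<le> 1 / 2" unfolding x_def using m by (intro shift_ratio_le_half) simp_all
  have "a / M \<le> 1" using assms(1,2) by simp
  have "((2 / 5) / real m) * (2 * real k + 1 + real k * (real k + 1) / real m) = (2 / 5) * x"
    by (simp add: x_def)
  then have "sqrt ((1 + x) / 6) < (a / M) / (2 * (1 + sqrt (1 - (a / M)\<^sup>2)))"
    using A \<open>0 \<le> x\<close> \<open>x \<le> 1 / 2\<close> \<open>a / M \<le> 1\<close>
    by (intro sqrt_lt_of_ratio_bound) (simp_all add: x_def)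
  then have "real m * sqrt ((1 + x) / 6) < real m * ((a / M) / (2 * (1 + sqrt (1 - (a / M)\<^sup>2))))"
    using \<open>0 < real m\<close> by (rule mult_strict_left_mono)
  moreover have "sqrt (real (m + k) * (real (m + k) + 1) / 6) = real m * sqrt ((1 + x) / 6)"
  proof -
    have "real (m + k) * (real (m + k) + 1) / 6 = (real m)\<^sup>2 * ((1 + x) / 6)"
      using \<open>0 < real m\<close> by (simp add: x_def field_simps power2_eq_square)
    then show ?thesis by (simp only: real_sqrt_mult real_sqrt_abs abs_of_nonneg of_nat_0_le_iff)
  qed
  ultimately show ?thesis by (simp add: power_divide)
qed

lemma sum_order_first_quadrant_qpoly:
  assumes "0 < M" "0 < mu" "\<bar>a\<bar> < M"
    and "mu * M \<in> {sqrt (real (m + k) * (real (m + k) + 1) / 6) <..<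
                      (real m * a / M) / (2 * (1 + sqrt (1 - a\<^sup>2 / M\<^sup>2)))}"
  shows "(\<Sum>z \<in> {z. Re z > 0 \<and> Im z > 0 \<and> poly (qpoly M mu a n m k) z = 0}.
           order z (qpoly M mu a n m k)) = 1"
proof -
  define e b where "e = eps M a" and "b = beta M mu (m + k)"
  have "0 < b" using assms(4) by (simp add: b_def beta_pos)
  have "b \<le> 6" by (simp add: b_def beta_def)
  have "0 \<le> e" using assms(1,3) abs_le_square_iff[of a M] by (simp add: e_def eps_def)
  have qpoly_eq: "qpoly M mu a n m k =
    [:1, of_real (4 / (b + e)) * (2 + of_real e - alphaC M mu a n m), of_real (2 * ((16 - b + 3 * e) / (b + e))),
      of_real (4 / (b + e)) * (2 + of_real e + alphaC M mu a n m), 1:]"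
    by (simp add: qpoly_def Let_def b_def e_def)
  show ?thesis
    unfolding qpoly_eq alphaC_def
  proof (rule sum_order_first_quadrant_quartic)
    show "0 < 4 / (b + e)" "0 < 2 * ((16 - b + 3 * e) / (b + e))"
      using \<open>0 < b\<close> \<open>b \<le> 6\<close> \<open>0 \<le> e\<close> by simp_all
    show "2 + e < alpha1 M mu a m"
      unfolding e_def using assms by (intro eps_add_2_lt_alpha1) auto
    show "0 < alpha2 M mu a n"
      using assms by (intro alpha2_pos)
  qed fact
qed

theorem mainTheorem11:
  fixes M mu a :: real and n m k :: nat
  assumes "M > 0" and "mu > 0"
    and "real m \<ge> 2 * real k + 1 + sqrt (6 * (real k)\<^sup>2 + 6 * real k + 1)"
    and "0 \<le> a" and "a < M"
    and "1 > a / M"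
    and "a / M > (2 * sqrt 6 / 5) *
           (sqrt (1 + (1 / real m) * (2 * real k + 1 + real k * (real k + 1) / real m))
            / (1 + ((2 / 5) / real m) * (2 * real k + 1 + real k * (real k + 1) / real m)))"
  shows "sqrt (real (m + k) * (real (m + k) + 1) / 6)
           < (real m * a / M) / (2 * (1 + sqrt (1 - a\<^sup>2 / M\<^sup>2)))
       \<and> (mu * M \<in> {sqrt (real (m + k) * (real (m + k) + 1) / 6) <..<
                      (real m * a / M) / (2 * (1 + sqrt (1 - a\<^sup>2 / M\<^sup>2)))}
          \<longrightarrow> (\<Sum>z \<in> {z. Re z > 0 \<and> Im z > 0 \<and> poly (qpoly M mu a n m k) z = 0}.
                 order z (qpoly M mu a n m k)) = 1)"
proof (intro conjI impI)
  show "sqrt (real (m + k) * (real (m + k) + 1) / 6)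
          < (real m * a / M) / (2 * (1 + sqrt (1 - a\<^sup>2 / M\<^sup>2)))"
    using assms by (intro sqrt_lt_interval_upper) auto
next
  assume "mu * M \<in> {sqrt (real (m + k) * (real (m + k) + 1) / 6) <..<
                      (real m * a / M) / (2 * (1 + sqrt (1 - a\<^sup>2 / M\<^sup>2)))}"
  then show "(\<Sum>z \<in> {z. Re z > 0 \<and> Im z > 0 \<and> poly (qpoly M mu a n m k) z = 0}.
                 order z (qpoly M mu a n m k)) = 1"
    using assms by (intro sum_order_first_quadrant_qpoly) auto
qed

end
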